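(* Let $f(\mathbf{x})=\mathbf{x}^{T}A\mathbf{x}+b^{T}\mathbf{x}+1$ with $A\in\mathbb{R}^{n\times n}$ symmetric and $b\in\mathbb{R}^n$. If $A_1,\dots,A_n$ and $B_1,\dots,B_n$ are real symmetric $2\times 2$ matrices with $f(\mathbf{x})=\det(I_2+\sum_j x_jA_j)=\det(I_2+\sum_j x_jB_j)$ for all $\mathbf{x}\in\mathbb{R}^n$, then there exists a real orthogonal $2\times 2$ matrix $V$ with $V^{T}A_jV=B_j$ for all $j=1,\dots,n$. *)

theory Defs
  imports "HOL-Analysis.Analysis"
begin

end

theory Submission
  imports Defs
begin

text \<open>
  For a \<open>2 \<times> 2\<close> matrix \<open>X\<close> one has \<open>det (I + X) = 1 + tr X + det X\<close>, so comparing the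
  determinant identities at \<open>x\<close> and \<open>-x\<close> shows that \<open>X(x) = \<Sum>\<^sub>j x\<^sub>j A\<^sub>j\<close> and
  \<open>Y(x) = \<Sum>\<^sub>j x\<^sub>j B\<^sub>j\<close> have the same trace and determinant for every \<open>x\<close>. The traceless part of a symmetric
  \<open>2 \<times> 2\<close> matrix is a point of the plane whose squared length is \<open>tr\<^sup>2 - 4 det\<close>;
  hence the traceless parts of the \<open>A\<^sub>j\<close> and of the \<open>B\<^sub>j\<close> have the same Gram matrix,
  and therefore differ by a rotation or a reflection of the plane. Conjugating by the
  rotation through \<open>\<theta>\<close> rotates traceless parts through \<open>-2\<theta>\<close>, and conjugating by a
  reflection reflects them, so rotating or reflecting through half the angle between the
  two families produces \<open>V\<close>.
\<close>

lemma products_eq_imp_eq_or_minus: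
  fixes x y :: "'i \<Rightarrow> 'a::linordered_idom"
  assumes prod: "\<And>j k. y j * y k = x j * x k"
  shows "(\<forall>j. y j = x j) \<or> (\<forall>j. y j = - x j)"
proof (rule ccontr)
  assume "\<not> ?thesis"
  then obtain j k where j: "y j \<noteq> x j" and k: "y k \<noteq> - x k" by blast
  have eq_or_minus: "y l = x l \<or> y l = - x l" for l
    using prod[of l l] by (simp add: square_eq_iff)
  have "y j = - x j" "x j \<noteq> 0" "y k = x k" "x k \<noteq> 0"
    using j k eq_or_minus[of j] eq_or_minus[of k] by auto
  with prod[of j k] show False by simp
qed

lemma sum_axis_scaleR:
  fixes f :: "'i::finite \<Rightarrow> 'a::real_vector"
  shows "(\<Sum>i\<in>UNIV. axis j 1 $ i *\<^sub>R f i) = f j"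
proof -
  have "axis j 1 $ i *\<^sub>R f i = (if i = j then f i else 0)" for i
    by (simp add: axis_def)
  then show ?thesis by simp
qed

lemma inner_eq_if_norm_lincomb_eq:
  fixes z w :: "'i::finite \<Rightarrow> 'a::real_inner"
  assumes "\<And>c::real^'i. norm (\<Sum>j\<in>UNIV. c $ j *\<^sub>R z j) = norm (\<Sum>j\<in>UNIV. c $ j *\<^sub>R w j)"
  shows "inner (z j) (z k) = inner (w j) (w k)"
proof -
  have "norm (z l) = norm (w l)" for l
    using assms[of "axis l 1"] by (simp add: sum_axis_scaleR)
  moreover have "norm (z j + z k) = norm (w j + w k)"
    using assms[of "axis j 1 + axis k 1"] by (simp add: scaleR_add_left sum.distrib sum_axis_scaleR)
  ultimately show ?thesis by (simp add: dot_norm)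
qed

lemma Im_mult_cnj_times_Im_mult_cnj:
  "Im (a * cnj c) * Im (b * cnj c) = (cmod c)^2 * inner a b - inner a c * inner b c"
  by (simp add: inner_complex_def cmod_power2) (simp add: power2_eq_square algebra_simps)

text \<open>
  Relative to a nonzero \<open>z i\<close>, the coordinates of \<open>z j\<close> along \<open>z i\<close> are fixed by the Gram
  matrix, and those across \<open>z i\<close> are fixed up to one common sign.
\<close>
lemma plane_congruence_if_inner_eq:
  fixes z w :: "'i \<Rightarrow> complex"
  assumes gram: "\<And>j k. inner (w j) (w k) = inner (z j) (z k)"
  obtains \<zeta> where "cmod \<zeta> = 1" and "(\<forall>j. w j = \<zeta> * z j) \<or> (\<forall>j. w j = \<zeta> * cnj (z j))"
proof (cases "\<forall>j. z j = 0")
  case True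
  then have "w j = 0" for j
    using gram[of j j] by simp
  with True show ?thesis using that[of 1] by simp
next
  case False
  then obtain i where "z i \<noteq> 0" by blast
  define N where "N = (cmod (z i))^2"
  have norm_wi: "cmod (w i) = cmod (z i)"
    using gram[of i i] by (simp add: norm_eq_sqrt_inner)
  have N_pos: "N > 0"
    using \<open>z i \<noteq> 0\<close> by (simp add: N_def)
  have wi_cnj: "w i * cnj (w i) = of_real N"
    using complex_norm_square[of "w i"] by (simp add: norm_wi N_def)
  have Re_eq: "Re (w j * cnj (w i)) = Re (z j * cnj (z i))" for j
    using gram[of j i] by (simp add: inner_complex_def)
  have "Im (w j * cnj (w i)) * Im (w k * cnj (w i)) = Im (z j * cnj (z i)) * Im (z k * cnj (z i))" for j k
    by (simp only: Im_mult_cnj_times_Im_mult_cnj norm_wi gram)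
  then have "(\<forall>j. Im (w j * cnj (w i)) = Im (z j * cnj (z i))) \<or>
      (\<forall>j. Im (w j * cnj (w i)) = - Im (z j * cnj (z i)))"
    by (rule products_eq_imp_eq_or_minus)
  then show ?thesis
  proof
    assume "\<forall>j. Im (w j * cnj (w i)) = Im (z j * cnj (z i))"
    then have "w j * cnj (w i) = z j * cnj (z i)" for j
      using Re_eq by (simp add: complex_eq_iff)
    then have "w j * of_real N = z j * cnj (z i) * w i" for j
      by (metis wi_cnj mult.assoc mult.commute)
    then have "w j = (w i * cnj (z i) / of_real N) * z j" for j
      using N_pos by (simp add: field_simps)
    moreover have "cmod (w i * cnj (z i) / of_real N) = 1"
      using \<open>z i \<noteq> 0\<close> by (simp add: norm_mult norm_divide norm_wi N_def power2_eq_square)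
    ultimately show ?thesis using that by blast
  next
    assume "\<forall>j. Im (w j * cnj (w i)) = - Im (z j * cnj (z i))"
    then have "w j * cnj (w i) = cnj (z j) * z i" for j
      using Re_eq by (simp add: complex_eq_iff)
    then have "w j * of_real N = cnj (z j) * z i * w i" for j
      by (metis wi_cnj mult.assoc mult.commute)
    then have "w j = (w i * z i / of_real N) * cnj (z j)" for j
      using N_pos by (simp add: field_simps)
    moreover have "cmod (w i * z i / of_real N) = 1"
      using \<open>z i \<noteq> 0\<close> by (simp add: norm_mult norm_divide norm_wi N_def power2_eq_square)
    ultimately show ?thesis using that by blast
  qed
qed

text \<open>
  For symmetric \<open>M\<close>, the traceless part \<open>M - (trace M / 2) I\<close> is
  \<open>[[d, e], [e, -d]]\<close>; it is encoded as the complex number \<open>2d + 2ei\<close>.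
\<close>
definition deviator :: "real^2^2 \<Rightarrow> complex" where
  "deviator M = Complex (M$1$1 - M$2$2) (2 * M$1$2)"

lemma symmetric2_entry: "transpose M = M \<Longrightarrow> M$2$1 = M$1$2"
  by (metis transpose_def vec_lambda_beta)

lemma symmetric_lincomb:
  fixes M :: "'j \<Rightarrow> real^'n^'n"
  assumes "\<And>j. transpose (M j) = M j"
  shows "transpose (\<Sum>j\<in>S. c j *\<^sub>R M j) = (\<Sum>j\<in>S. c j *\<^sub>R M j)"
proof -
  have "M j $ k $ l = M j $ l $ k" for j k l
    using assms[of j] by (metis transpose_def vec_lambda_beta)
  then show ?thesis by (simp add: vec_eq_iff transpose_def sum_component)
qed

lemma det_mat1_add_2: "det (mat 1 + M) = 1 + trace M + det (M :: 'a::comm_ring_1^2^2)"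
  by (simp add: det_2 trace_def sum_2 mat_def algebra_simps)

lemma det_mat1_diff_2: "det (mat 1 - M) = 1 - trace M + det (M :: 'a::comm_ring_1^2^2)"
  by (simp add: det_2 trace_def sum_2 mat_def algebra_simps)

lemma trace_det_eq_if_det_mat1_pm_eq:
  fixes M N :: "real^2^2"
  assumes "det (mat 1 + M) = det (mat 1 + N)" and "det (mat 1 - M) = det (mat 1 - N)"
  shows "trace M = trace N" and "det M = det N"
  using assms unfolding det_mat1_add_2 det_mat1_diff_2 by linarith+

lemma discriminant_symmetric2:
  assumes "transpose M = M"
  shows "(trace M)^2 - 4 * det M = (cmod (deviator M))^2"
  using symmetric2_entry[OF assms]
  by (simp add: det_2 trace_def sum_2 deviator_def cmod_power2) (simp add: power2_eq_square algebra_simps)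

lemma linear_deviator: "linear deviator"
  by (rule linearI) (simp_all add: deviator_def complex_eq_iff algebra_simps)

lemma deviator_lincomb: "deviator (\<Sum>j\<in>S. c j *\<^sub>R M j) = (\<Sum>j\<in>S. c j *\<^sub>R deviator (M j))"
  using linear_deviator by (simp add: linear_sum linear_scale)

lemma symmetric2_eqI:
  assumes "transpose M = M" "transpose N = N" "trace M = trace N" "deviator M = deviator N"
  shows "M = N"
  using assms(3,4) symmetric2_entry[OF assms(1)] symmetric2_entry[OF assms(2)]
  by (auto simp: vec_eq_iff forall_2 trace_def sum_2 deviator_def complex_eq_iff)

definition plane_rotation :: "complex \<Rightarrow> real^2^2" where
  "plane_rotation z = vector [vector [Re z, - Im z], vector [Im z, Re z]]"

definition plane_reflection :: "complex \<Rightarrow> real^2^2" where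
  "plane_reflection z = vector [vector [Re z, Im z], vector [Im z, - Re z]]"

lemma orthogonal_plane_rotation: "cmod z = 1 \<Longrightarrow> orthogonal_matrix (plane_rotation z)"
  by (simp add: plane_rotation_def orthogonal_matrix_def vec_eq_iff forall_2
      matrix_matrix_mult_def sum_2 transpose_def mat_def)
     (metis cmod_power2 power2_eq_square power_one add.commute)

lemma orthogonal_plane_reflection: "cmod z = 1 \<Longrightarrow> orthogonal_matrix (plane_reflection z)"
  by (simp add: plane_reflection_def orthogonal_matrix_def vec_eq_iff forall_2
      matrix_matrix_mult_def sum_2 transpose_def mat_def)
     (metis cmod_power2 power2_eq_square power_one add.commute)

lemma deviator_plane_rotation_conj:
  assumes "transpose M = M"
  shows "deviator (transpose (plane_rotation z) ** M ** plane_rotation z) = cnj z ^ 2 * deviator M"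
  using symmetric2_entry[OF assms]
  apply (simp add: deviator_def plane_rotation_def matrix_matrix_mult_def sum_2 transpose_def
      complex_eq_iff power2_eq_square)
  apply (simp add: algebra_simps)
  done

lemma deviator_plane_reflection_conj:
  assumes "transpose M = M"
  shows "deviator (transpose (plane_reflection z) ** M ** plane_reflection z) = z ^ 2 * cnj (deviator M)"
  using symmetric2_entry[OF assms]
  apply (simp add: deviator_def plane_reflection_def matrix_matrix_mult_def sum_2 transpose_def
      complex_eq_iff power2_eq_square)
  apply (simp add: algebra_simps)
  done

lemma trace_orthogonal_conj:
  fixes M V :: "real^'n^'n"
  assumes "orthogonal_matrix V"
  shows "trace (transpose V ** M ** V) = trace M"
  using assms by (metis matrix_mul_assoc matrix_mul_rid orthogonal_matrix_def trace_mul_sym)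

lemma symmetric_orthogonal_conj:
  fixes M V :: "real^'n^'n"
  assumes "transpose M = M"
  shows "transpose (transpose V ** M ** V) = transpose V ** M ** V"
  using assms by (simp add: matrix_transpose_mul matrix_mul_assoc)

lemma orthogonal_conj_eqI:
  assumes "orthogonal_matrix V" "transpose M = M" "transpose N = N" "trace M = trace N"
    and "deviator (transpose V ** M ** V) = deviator N"
  shows "transpose V ** M ** V = N"
  using assms by (auto intro!: symmetric2_eqI[of "transpose V ** M ** V" N]
      simp: symmetric_orthogonal_conj trace_orthogonal_conj)

lemma orthogonally_similar_if_deviators_congruent:
  fixes M N :: "'j \<Rightarrow> real^2^2"
  assumes sym: "\<And>j. transpose (M j) = M j" "\<And>j. transpose (N j) = N j"
    and trace: "\<And>j. trace (M j) = trace (N j)"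
    and "cmod \<zeta> = 1"
    and "(\<forall>j. deviator (N j) = \<zeta> * deviator (M j)) \<or>
      (\<forall>j. deviator (N j) = \<zeta> * cnj (deviator (M j)))"
  shows "\<exists>V. orthogonal_matrix V \<and> (\<forall>j. transpose V ** M j ** V = N j)"
proof -
  from assms(5) obtain V where "orthogonal_matrix V"
    and deviator_eq: "\<And>j. deviator (transpose V ** M j ** V) = deviator (N j)"
  proof
    assume "\<forall>j. deviator (N j) = \<zeta> * deviator (M j)"
    moreover define R where "R = plane_rotation (cnj (csqrt \<zeta>))"
    ultimately have "deviator (transpose R ** M j ** R) = deviator (N j)" for j
      using sym(1) by (simp add: deviator_plane_rotation_conj)
    moreover have "orthogonal_matrix R"
      using \<open>cmod \<zeta> = 1\<close> by (simp add: R_def orthogonal_plane_rotation)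
    ultimately show ?thesis using that by blast
  next
    assume "\<forall>j. deviator (N j) = \<zeta> * cnj (deviator (M j))"
    moreover define R where "R = plane_reflection (csqrt \<zeta>)"
    ultimately have "deviator (transpose R ** M j ** R) = deviator (N j)" for j
      using sym(1) by (simp add: deviator_plane_reflection_conj)
    moreover have "orthogonal_matrix R"
      using \<open>cmod \<zeta> = 1\<close> by (simp add: R_def orthogonal_plane_reflection)
    ultimately show ?thesis using that by blast
  qed
  have "transpose V ** M j ** V = N j" for j
    by (rule orthogonal_conj_eqI[OF \<open>orthogonal_matrix V\<close> sym trace deviator_eq])
  with \<open>orthogonal_matrix V\<close> show ?thesis by blast
qed

theorem mainTheorem4:
  fixes A :: "real^'n^'n" and b :: "real^'n"
    and As Bs :: "'n \<Rightarrow> real^2^2"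
  assumes "transpose A = A"
    and "\<And>j. transpose (As j) = As j"
    and "\<And>j. transpose (Bs j) = Bs j"
    and "\<And>x::real^'n. x \<bullet> (A *v x) + b \<bullet> x + 1
            = det (mat 1 + (\<Sum>j\<in>UNIV. x $ j *\<^sub>R As j))"
    and "\<And>x::real^'n. x \<bullet> (A *v x) + b \<bullet> x + 1
            = det (mat 1 + (\<Sum>j\<in>UNIV. x $ j *\<^sub>R Bs j))"
  shows "\<exists>V::real^2^2. orthogonal_matrix V \<and> (\<forall>j. transpose V ** As j ** V = Bs j)"
proof -
  define X where "X x = (\<Sum>j\<in>UNIV. x $ j *\<^sub>R As j)" for x :: "real^'n"
  define Y where "Y x = (\<Sum>j\<in>UNIV. x $ j *\<^sub>R Bs j)" for x :: "real^'n"
  have X_sym: "transpose (X x) = X x" and Y_sym: "transpose (Y x) = Y x" for x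
    unfolding X_def Y_def using assms(2,3) by (simp_all add: symmetric_lincomb)
  have det_eq: "det (mat 1 + X x) = det (mat 1 + Y x)" for x
    using assms(4,5) unfolding X_def Y_def by metis
  have "det (mat 1 - X x) = det (mat 1 - Y x)" for x
    using det_eq[of "-x"] by (simp add: X_def Y_def sum_negf)
  with det_eq have trace_eq: "trace (X x) = trace (Y x)" and "det (X x) = det (Y x)" for x
    using trace_det_eq_if_det_mat1_pm_eq by blast+
  have trace_As_Bs: "trace (As j) = trace (Bs j)" for j
    using trace_eq[of "axis j 1"] by (simp add: X_def Y_def sum_axis_scaleR)
  have "cmod (deviator (X x)) = cmod (deviator (Y x))" for x
    using \<open>det (X x) = det (Y x)\<close> trace_eq
      discriminant_symmetric2[OF X_sym] discriminant_symmetric2[OF Y_sym]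
    by (metis norm_ge_zero power2_eq_iff_nonneg)
  then have "inner (deviator (Bs j)) (deviator (Bs k)) = inner (deviator (As j)) (deviator (As k))"
    for j k
    by (intro inner_eq_if_norm_lincomb_eq) (simp add: X_def Y_def deviator_lincomb)
  then obtain \<zeta> where "cmod \<zeta> = 1" and congruence:
      "(\<forall>j. deviator (Bs j) = \<zeta> * deviator (As j)) \<or>
       (\<forall>j. deviator (Bs j) = \<zeta> * cnj (deviator (As j)))"
    by (rule plane_congruence_if_inner_eq)
  show ?thesis
    using assms(2,3) trace_As_Bs \<open>cmod \<zeta> = 1\<close> congruence
    by (rule orthogonally_similar_if_deviators_congruent)
qed

end
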